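(* Let $C_e:=\min\{\tfrac12(\rho/\bar v)^2,\ \tfrac{\sqrt2}{4}(\rho/\bar v)\}$. Under partial information feedback, for any $t\ge2$, the OGD-CB algorithm guarantees $|\mathcal I_t|\ge C_e\,(t-1)$.
   Context: Model: constants $\bar v>0$, $\rho\in(0,\bar v]$; $T$ rounds; budget $B=\rho T$. Round $t$: value $v_t\in[0,\bar v]$, highest competing bid $p_t\in[0,\bar v]$; buyer picks $x_t\in\{0,1\}$, pays $x_tc_t$ with $c_t=p_t\mathbf 1[v_t\ge p_t]$. Partial information feedback: $p_t$ is observed at the end of round $t$ only if $x_t=1$. OGD-CB algorithm: $\mathcal I_1=\emptyset$, $B_1=B$, $\lambda_1=0$. For $t=1,\dots,T$: observe $v_t$. If $t=1$: $x_1=1$, $\lambda_2=\lambda_1$. Otherwise: $\epsilon_t=\sqrt{(\ln 2+2\ln T)/(2|\mathcal I_t|)}$; $\tilde r_t(v)=\frac1{|\mathcal I_t|}\sum_{\tau\in\mathcal I_t}(v-p_\tau)^++\epsilon_tv$; $\tilde c_t(v)=\frac1{|\mathcal I_t|}\sum_{\tau\in\mathcal I_t}p_\tau\mathbf 1[v\ge p_\tau]-2\epsilon_tv$; $x_t=\mathbf 1[\tilde r_t(v_t)\ge\lambda_t\tilde c_t(v_t)]$; $\eta_t=1/(\bar v\sqrt t)$; $\lambda_{t+1}=(\lambda_t+\eta_t(x_t\tilde c_t(v_t)-\rho))^+$. If $x_t=1$, observe $p_t$ and set $\mathcal I_{t+1}=\mathcal I_t\cup\{t\}$, else $\mathcal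 I_{t+1}=\mathcal I_t$. Set $B_{t+1}=B_t-x_tc_t$; if $B_{t+1}<\bar v$, stop. *)

theory Defs
  imports Complex_Main
begin

text \<open>Parameters: vb (= \<bar>v), rho, horizon T, value sequence v, highest competing bid sequence p
  (rounds indexed 1..T).  The state after n rounds is the state at the beginning of round n+1.\<close>

record ogd_state =
  ogd_I :: "nat set"      \<comment> \<open>index set I_t of rounds in which we won (and observed p)\<close>
  ogd_B :: real
  ogd_lam :: real
  ogd_stopped :: bool

definition ogd_eps :: "nat \<Rightarrow> nat \<Rightarrow> real" where
  "ogd_eps T n = sqrt ((ln 2 + 2 * ln (real T)) / (2 * real n))"

definition ogd_rtilde :: "nat \<Rightarrow> (nat \<Rightarrow> real) \<Rightarrow> nat set \<Rightarrow> real \<Rightarrow> real" where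
  "ogd_rtilde T p I x = (1 / real (card I)) * (\<Sum>\<tau>\<in>I. max (x - p \<tau>) 0) + ogd_eps T (card I) * x"

definition ogd_ctilde :: "nat \<Rightarrow> (nat \<Rightarrow> real) \<Rightarrow> nat set \<Rightarrow> real \<Rightarrow> real" where
  "ogd_ctilde T p I x = (1 / real (card I)) * (\<Sum>\<tau>\<in>I. if x \<ge> p \<tau> then p \<tau> else 0)
      - 2 * ogd_eps T (card I) * x"

definition ogd_cost :: "(nat \<Rightarrow> real) \<Rightarrow> (nat \<Rightarrow> real) \<Rightarrow> nat \<Rightarrow> real" where
  "ogd_cost v p t = (if v t \<ge> p t then p t else 0)"

definition ogd_eta :: "real \<Rightarrow> nat \<Rightarrow> real" where
  "ogd_eta vb t = 1 / (vb * sqrt (real t))"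

fun ogd_run :: "real \<Rightarrow> real \<Rightarrow> nat \<Rightarrow> (nat \<Rightarrow> real) \<Rightarrow> (nat \<Rightarrow> real) \<Rightarrow> nat \<Rightarrow> ogd_state" where
  "ogd_run vb rho T v p 0 = \<lparr>ogd_I = {}, ogd_B = rho * real T, ogd_lam = 0, ogd_stopped = False\<rparr>"
| "ogd_run vb rho T v p (Suc n) =
    (let s = ogd_run vb rho T v p n; t = Suc n in
     if ogd_stopped s then s else
     let x = (if t = 1 then True
              else ogd_rtilde T p (ogd_I s) (v t) \<ge> ogd_lam s * ogd_ctilde T p (ogd_I s) (v t));
         lam' = (if t = 1 then ogd_lam s
                 else max 0 (ogd_lam s + ogd_eta vb t *
                        ((if x then ogd_ctilde T p (ogd_I s) (v t) else 0) - rho)));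
         I' = (if x then insert t (ogd_I s) else ogd_I s);
         B' = ogd_B s - (if x then ogd_cost v p t else 0)
     in \<lparr>ogd_I = I', ogd_B = B', ogd_lam = lam', ogd_stopped = (B' < vb)\<rparr>)"

end

theory Submission
  imports Defs
begin

text \<open>Write \<open>a = rho / vb\<close> and let \<open>k\<close> be the last round at which the dual variable
  \<open>\<lambda>\<close> was 0 (or \<open>k = 1\<close>). After round 1, \<open>\<lambda>\<close> rises by at most \<open>(1 - a) / sqrt s\<close> in a
  won round \<open>s\<close> and falls by \<open>a / sqrt s\<close> in a skipped one, so after round \<open>n\<close> it is at most
  the sum of \<open>1 / sqrt s\<close> over the won rounds in \<open>(k, n]\<close> minus \<open>a\<close> times the sum over all of
  \<open>(k, n]\<close>. Round \<open>n + 1\<close> is skipped only if \<open>\<lambda>\<close> exceeds the confidence radius \<open>\<epsilon>\<close>, which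
  is at least \<open>1 / sqrt (n + 1)\<close>; hence \<open>a\<close> times the sum over \<open>(k, n + 1]\<close> is at most the
  sum over the won rounds in \<open>(k, n]\<close>. That sum is largest when the won rounds come first, and
  comparing both sums with \<open>\<integral> 1 / sqrt x = 2 sqrt x\<close> shows that at least \<open>a\<^sup>2 / 2 * (n + 1 - k)\<close>
  rounds of \<open>(k, n]\<close> were won. Strong induction on the round gives
  \<open>card I\<^sub>t \<ge> a\<^sup>2 / 2 * (t - 1)\<close>, and \<open>C\<^sub>e \<le> a\<^sup>2 / 2\<close>.\<close>

abbreviation inv_sqrt_sum :: "nat set \<Rightarrow> real" where
  "inv_sqrt_sum A \<equiv> \<Sum>s\<in>A. 1 / sqrt (real s)"

lemma sum_greaterThanAtMost_Suc:
  "k \<le> n \<Longrightarrow> sum f {k<..Suc n} = sum f {k<..n} + f (Suc n)"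
proof -
  assume "k \<le> n"
  then have "{k<..Suc n} = insert (Suc n) {k<..n}" by auto
  then show ?thesis by (simp add: add.commute)
qed

lemma inverse_sqrt_Suc_le_sqrt_diff:
  "1 / sqrt (real (Suc n)) \<le> 2 * (sqrt (real (Suc n)) - sqrt (real n))"
proof -
  define a b where "a = sqrt (real (Suc n))" and "b = sqrt (real n)"
  have "0 < a" "0 \<le> a - b" by (simp_all add: a_def b_def)
  have "1 = (a - b) * (a + b)" by (simp add: a_def b_def algebra_simps)
  also have "\<dots> \<le> (a - b) * (2 * a)"
    using \<open>0 \<le> a - b\<close> by (intro mult_left_mono) (simp_all add: a_def b_def)
  finally have "1 \<le> 2 * (a - b) * a" by (simp add: mult_ac)
  then have "1 / a \<le> 2 * (a - b)" by (simp only: pos_divide_le_eq[OF \<open>0 < a\<close>])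
  then show ?thesis by (simp add: a_def b_def)
qed

lemma sqrt_diff_le_inverse_sqrt:
  assumes "1 \<le> n"
  shows "2 * (sqrt (real (Suc n)) - sqrt (real n)) \<le> 1 / sqrt (real n)"
proof -
  define a b where "a = sqrt (real (Suc n))" and "b = sqrt (real n)"
  have "0 < b" "0 \<le> a - b" using assms by (simp_all add: a_def b_def)
  have "(a - b) * (2 * b) \<le> (a - b) * (a + b)"
    using \<open>0 \<le> a - b\<close> \<open>0 < b\<close> by (intro mult_left_mono) simp_all
  also have "\<dots> = 1" by (simp add: a_def b_def algebra_simps)
  finally have "2 * (a - b) * b \<le> 1" by (simp add: mult_ac)
  then have "2 * (a - b) \<le> 1 / b" by (simp only: pos_le_divide_eq[OF \<open>0 < b\<close>])
  then show ?thesis by (simp add: a_def b_def)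
qed

lemma inv_sqrt_sum_upper:
  "inv_sqrt_sum {k<..k + j} \<le> 2 * (sqrt (real (k + j)) - sqrt (real k))"
proof (induction j)
  case (Suc j)
  then show ?case
    using inverse_sqrt_Suc_le_sqrt_diff[of "k + j"] by (simp add: sum_greaterThanAtMost_Suc)
qed simp

lemma inv_sqrt_sum_lower:
  "k \<le> q \<Longrightarrow> 2 * (sqrt (real (Suc q)) - sqrt (real (Suc k))) \<le> inv_sqrt_sum {k<..q}"
proof (induction q)
  case (Suc q)
  show ?case
  proof (cases "k = Suc q")
    case False
    then have "k \<le> q" using Suc.prems by simp
    then show ?thesis
      using Suc.IH sqrt_diff_le_inverse_sqrt[of "Suc q"] by (simp add: sum_greaterThanAtMost_Suc)
  qed simp
qed simp

lemma sum_le_sum_initial_segment: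
  fixes f :: "nat \<Rightarrow> 'a::ordered_comm_monoid_add"
  assumes antimono: "\<And>m n. k < m \<Longrightarrow> m \<le> n \<Longrightarrow> f n \<le> f m" and "B \<subseteq> {k<..n}"
  shows "sum f B \<le> sum f {k<..k + card B}"
  using assms(2)
proof (induction n arbitrary: B)
  case (Suc n)
  show ?case
  proof (cases "Suc n \<in> B")
    case False
    then have "B \<subseteq> {k<..n}" using Suc.prems by (auto simp: subset_iff le_Suc_eq)
    then show ?thesis by (rule Suc.IH)
  next
    case True
    let ?B = "B - {Suc n}"
    have fin: "finite B" using Suc.prems finite_subset by blast
    have sub: "?B \<subseteq> {k<..n}" using Suc.prems by (auto simp: le_Suc_eq)
    have card_B: "card B = Suc (card ?B)" using card_Suc_Diff1[OF fin True] by simp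
    have "card ?B \<le> n - k" using card_mono[OF _ sub] by simp
    then have last: "Suc (k + card ?B) \<le> Suc n" using True Suc.prems by auto
    have "sum f B = sum f ?B + f (Suc n)" using True fin by (simp add: sum.remove add.commute)
    also have "\<dots> \<le> sum f {k<..k + card ?B} + f (Suc (k + card ?B))"
      using Suc.IH[OF sub] antimono[OF _ last] by (intro add_mono) auto
    also have "\<dots> = sum f {k<..k + card B}"
      using card_B by (simp add: sum_greaterThanAtMost_Suc)
    finally show ?thesis .
  qed
qed simp

lemma count_lower_bound_from_inv_sqrt_sums:
  assumes "1 \<le> k" "k \<le> q" "0 \<le> a" "a \<le> 1"
    and le: "a * inv_sqrt_sum {k<..q} \<le> inv_sqrt_sum {k<..k + j}"
  shows "a\<^sup>2 / 2 * (real q - real k) \<le> real j"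
proof -
  define X Y K Q where "X = sqrt (real k)" and "Y = sqrt (real (k + j))"
    and "K = sqrt (real (Suc k))" and "Q = sqrt (real (Suc q))"
  have "0 \<le> X" "X \<le> Y" "0 \<le> K" "K \<le> Q" using assms by (simp_all add: X_def Y_def K_def Q_def)
  have "2 * (a * (Q - K)) \<le> a * inv_sqrt_sum {k<..q}"
    using inv_sqrt_sum_lower[OF \<open>k \<le> q\<close>] \<open>0 \<le> a\<close> unfolding Q_def K_def
    by (subst mult.left_commute) (rule mult_left_mono)
  also have "\<dots> \<le> 2 * (Y - X)"
    using le inv_sqrt_sum_upper[of k j] unfolding X_def Y_def by linarith
  finally have QK: "a * Q - a * K \<le> Y - X" by (simp add: right_diff_distrib)
  have "K \<le> sqrt (4 * real k)" using \<open>1 \<le> k\<close> unfolding K_def by simp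
  then have "a * K \<le> 2 * X"
    using \<open>0 \<le> K\<close> assms(3,4) mult_left_le_one_le[of K a] by (simp add: X_def real_sqrt_mult)
  have "a\<^sup>2 * (real q - real k) = (a * Q - a * K) * (a * Q + a * K)"
    by (simp add: Q_def K_def power2_eq_square algebra_simps)
  also have "\<dots> \<le> (Y - X) * (a * Q + a * K)"
    using QK \<open>0 \<le> a\<close> \<open>0 \<le> K\<close> \<open>K \<le> Q\<close> by (intro mult_right_mono) simp_all
  also have "\<dots> \<le> (Y - X) * (Y - X + 4 * X)"
    using QK \<open>a * K \<le> 2 * X\<close> \<open>X \<le> Y\<close> by (intro mult_left_mono) simp_all
  also have "\<dots> \<le> (Y - X) * (2 * (Y + X))"
    using \<open>X \<le> Y\<close> by (intro mult_left_mono) simp_all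
  also have "\<dots> = 2 * real j" using \<open>0 \<le> X\<close>
    by (simp add: X_def Y_def algebra_simps flip: power2_eq_square)
  finally show ?thesis by simp
qed

lemma ogd_eps_nonneg: "0 \<le> ogd_eps T n" \<comment> \<open>also for \<open>T = 0\<close>, as \<open>ln 0 = 0\<close>\<close>
  by (cases "T = 0") (simp_all add: ogd_eps_def)

lemma ogd_eps_ge_inverse_sqrt:
  assumes "1 \<le> n" "n < q" "q \<le> T"
  shows "1 / sqrt (real q) \<le> ogd_eps T n"
proof -
  have q: "0 < real q" using assms by simp
  have "1 - 1 / real q \<le> ln (real q)"
    using ln_le_minus_one[of "1 / real q"] q by (simp add: ln_div)
  also have "\<dots> \<le> ln (real T)" using assms q by simp
  finally have "1 - 1 / real q \<le> ln (real T)" .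
  moreover have "0 \<le> ln (2::real)" by simp
  ultimately have "2 * (1 - 1 / real q) \<le> ln 2 + 2 * ln (real T)" by argo
  moreover have "2 * real n / real q \<le> 2 * (1 - 1 / real q)"
    using assms q by (simp add: field_simps)
  ultimately have "(2 * real n / real q) / (2 * real n) \<le> (ln 2 + 2 * ln (real T)) / (2 * real n)"
    using assms by (intro divide_right_mono) auto
  then have "sqrt (1 / real q) \<le> ogd_eps T n"
    using assms by (simp add: ogd_eps_def)
  then show ?thesis by (simp add: real_sqrt_divide)
qed

lemma ogd_ctilde_le: "0 \<le> x \<Longrightarrow> ogd_ctilde T p I x \<le> x"
proof -
  assume "0 \<le> x"
  have "(\<Sum>\<tau>\<in>I. if p \<tau> \<le> x then p \<tau> else 0) \<le> real (card I) * x"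
    using sum_mono[of I "\<lambda>\<tau>. if p \<tau> \<le> x then p \<tau> else 0" "\<lambda>_. x"] \<open>0 \<le> x\<close> by auto
  then have "(1 / real (card I)) * (\<Sum>\<tau>\<in>I. if p \<tau> \<le> x then p \<tau> else 0) \<le> x"
    using \<open>0 \<le> x\<close> by (cases "card I = 0") (simp_all add: field_simps)
  moreover have "0 \<le> ogd_eps T (card I) * x" using \<open>0 \<le> x\<close> ogd_eps_nonneg by simp
  ultimately show ?thesis unfolding ogd_ctilde_def by linarith
qed

lemma ogd_rtilde_ge: "ogd_eps T (card I) * x \<le> ogd_rtilde T p I x"
  unfolding ogd_rtilde_def by (simp add: sum_nonneg)

text \<open>For \<open>\<lambda> \<le> \<epsilon>\<close> the optimistic reward \<open>\<ge> \<epsilon> x\<close> already pays for \<open>\<lambda>\<close> times the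
  pessimistic cost \<open>\<le> x\<close>.\<close>
lemma ogd_eps_less_if_no_bid:
  assumes "\<not> lam * ogd_ctilde T p I x \<le> ogd_rtilde T p I x" "0 \<le> x" "0 \<le> lam"
  shows "ogd_eps T (card I) < lam"
proof (rule ccontr)
  let ?e = "ogd_eps T (card I)" and ?c = "ogd_ctilde T p I x"
  assume "\<not> ?e < lam"
  have "lam * ?c \<le> ?e * x"
  proof (cases "0 \<le> ?c")
    case True
    have "lam * ?c \<le> ?e * ?c" using \<open>\<not> ?e < lam\<close> True by (simp add: mult_right_mono)
    also have "\<dots> \<le> ?e * x" using ogd_ctilde_le[OF assms(2)] ogd_eps_nonneg by (rule mult_left_mono)
    finally show ?thesis .
  next
    case False
    then have "lam * ?c \<le> 0" using assms(3) by (simp add: mult_nonneg_nonpos)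
    also have "0 \<le> ?e * x" using ogd_eps_nonneg assms(2) by simp
    finally show ?thesis .
  qed
  with ogd_rtilde_ge[of T I x p] assms(1) show False by linarith
qed

definition ogd_bid :: "nat \<Rightarrow> (nat \<Rightarrow> real) \<Rightarrow> (nat \<Rightarrow> real) \<Rightarrow> nat \<Rightarrow> ogd_state \<Rightarrow> bool" where
  "ogd_bid T v p t s \<longleftrightarrow>
     t = 1 \<or> ogd_lam s * ogd_ctilde T p (ogd_I s) (v t) \<le> ogd_rtilde T p (ogd_I s) (v t)"

context
  fixes vb rho :: real and T :: nat and v p :: "nat \<Rightarrow> real"
begin

abbreviation ogd_after :: "nat \<Rightarrow> ogd_state" where
  "ogd_after n \<equiv> ogd_run vb rho T v p n"

abbreviation ogd_bids :: "nat \<Rightarrow> bool" where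
  "ogd_bids t \<equiv> ogd_bid T v p t (ogd_after (t - 1))"

lemma ogd_I_subset: "ogd_I (ogd_after n) \<subseteq> {1..n}"
  by (induction n) (auto simp: Let_def)

lemma not_stopped_mono:
  "m \<le> n \<Longrightarrow> \<not> ogd_stopped (ogd_after n) \<Longrightarrow> \<not> ogd_stopped (ogd_after m)"
  by (induction n) (auto simp: Let_def le_Suc_eq split: if_splits)

lemma ogd_I_Suc:
  "\<not> ogd_stopped (ogd_after n) \<Longrightarrow>
    ogd_I (ogd_after (Suc n)) =
      (if ogd_bids (Suc n) then insert (Suc n) (ogd_I (ogd_after n)) else ogd_I (ogd_after n))"
  by (simp add: Let_def ogd_bid_def)

lemma ogd_lam_Suc:
  "\<not> ogd_stopped (ogd_after n) \<Longrightarrow> 1 \<le> n \<Longrightarrow>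
    ogd_lam (ogd_after (Suc n)) = max 0 (ogd_lam (ogd_after n) + ogd_eta vb (Suc n) *
      ((if ogd_bids (Suc n) then ogd_ctilde T p (ogd_I (ogd_after n)) (v (Suc n)) else 0) - rho))"
  by (simp add: Let_def ogd_bid_def)

lemma ogd_lam_nonneg: "0 \<le> ogd_lam (ogd_after n)"
  by (induction n) (auto simp: Let_def)

lemma ogd_I_Int_atMost: "k \<le> n \<Longrightarrow> ogd_I (ogd_after n) \<inter> {..k} = ogd_I (ogd_after k)"
proof (induction n)
  case (Suc n)
  show ?case
  proof (cases "k = Suc n")
    case True
    then show ?thesis using ogd_I_subset[of "Suc n"] by auto
  next
    case False
    with Suc show ?thesis by (auto simp: Let_def)
  qed
qed (use ogd_I_subset[of 0] in auto)

lemma ogd_run_1: "ogd_I (ogd_after 1) = {1}" "ogd_lam (ogd_after 1) = 0"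
  by (simp_all add: Let_def)

declare ogd_run.simps(2) [simp del]

context
  assumes vb: "0 < vb" and rho: "0 < rho" "rho \<le> vb"
    and value_range: "\<And>s. s \<in> {1..T} \<Longrightarrow> 0 \<le> v s \<and> v s \<le> vb"
begin

lemma ogd_lam_Suc_le_if_bid:
  assumes "1 \<le> n" "Suc n \<le> T" "\<not> ogd_stopped (ogd_after n)" "ogd_bids (Suc n)"
  shows "ogd_lam (ogd_after (Suc n))
    \<le> ogd_lam (ogd_after n) + (1 - rho / vb) / sqrt (real (Suc n))"
proof -
  let ?c = "ogd_ctilde T p (ogd_I (ogd_after n)) (v (Suc n))" and ?\<eta> = "ogd_eta vb (Suc n)"
  have "0 \<le> v (Suc n)" "v (Suc n) \<le> vb" using value_range assms(2) by auto
  then have "?c \<le> vb" by (meson ogd_ctilde_le order_trans)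
  then have "?\<eta> * (?c - rho) \<le> ?\<eta> * (vb - rho)"
    using vb by (intro mult_left_mono) (simp_all add: ogd_eta_def)
  also have "\<dots> = (1 - rho / vb) / sqrt (real (Suc n))"
    using vb by (simp add: ogd_eta_def field_simps)
  finally have "?\<eta> * (?c - rho) \<le> (1 - rho / vb) / sqrt (real (Suc n))" .
  moreover have "0 \<le> (1 - rho / vb) / sqrt (real (Suc n))" using vb rho by simp
  moreover have "ogd_lam (ogd_after (Suc n)) = max 0 (ogd_lam (ogd_after n) + ?\<eta> * (?c - rho))"
    using ogd_lam_Suc[OF assms(3,1)] assms(4) by simp
  ultimately show ?thesis using ogd_lam_nonneg[of n] by linarith
qed

lemma ogd_lam_Suc_if_no_bid:
  assumes "1 \<le> n" "\<not> ogd_stopped (ogd_after n)" "\<not> ogd_bids (Suc n)"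
  shows "ogd_lam (ogd_after (Suc n)) =
    max 0 (ogd_lam (ogd_after n) - rho / vb / sqrt (real (Suc n)))"
  using ogd_lam_Suc[OF assms(2,1)] assms(3) by (simp add: ogd_eta_def)

lemma ogd_lam_le_since_reset:
  "1 \<le> n \<Longrightarrow> n \<le> T \<Longrightarrow> \<not> ogd_stopped (ogd_after n) \<Longrightarrow>
    \<exists>k. 1 \<le> k \<and> k \<le> n \<and>
      ogd_lam (ogd_after n)
        \<le> inv_sqrt_sum (ogd_I (ogd_after n) \<inter> {k<..n}) - rho / vb * inv_sqrt_sum {k<..n}"
proof (induction n)
  case (Suc n)
  show ?case
  proof (cases "n = 0")
    case True
    then show ?thesis using ogd_run_1(2) by (intro exI[of _ 1]) simp
  next
    case False
    then have "1 \<le> n" by simp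
    have active: "\<not> ogd_stopped (ogd_after n)" using not_stopped_mono[of n "Suc n"] Suc.prems by simp
    then obtain k where k: "1 \<le> k" "k \<le> n" and
      IH: "ogd_lam (ogd_after n)
        \<le> inv_sqrt_sum (ogd_I (ogd_after n) \<inter> {k<..n}) - rho / vb * inv_sqrt_sum {k<..n}"
      using Suc.IH \<open>1 \<le> n\<close> Suc.prems by auto
    define w a where "w = 1 / sqrt (real (Suc n))" and "a = rho / vb"
    have "Suc n \<notin> ogd_I (ogd_after n)" using ogd_I_subset[of n] by auto
    have interval: "{k<..Suc n} = insert (Suc n) {k<..n}" using k by auto
    have B: "inv_sqrt_sum {k<..Suc n} = inv_sqrt_sum {k<..n} + w"
      using k by (simp add: sum_greaterThanAtMost_Suc w_def)
    show ?thesis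
    proof (cases "ogd_bids (Suc n)")
      case True
      then have "ogd_I (ogd_after (Suc n)) \<inter> {k<..Suc n}
          = insert (Suc n) (ogd_I (ogd_after n) \<inter> {k<..n})"
        using ogd_I_Suc[OF active] interval ogd_I_subset[of n] by auto
      then have A: "inv_sqrt_sum (ogd_I (ogd_after (Suc n)) \<inter> {k<..Suc n})
          = inv_sqrt_sum (ogd_I (ogd_after n) \<inter> {k<..n}) + w"
        using \<open>Suc n \<notin> ogd_I (ogd_after n)\<close> by (simp add: w_def)
      have "ogd_lam (ogd_after (Suc n)) \<le> ogd_lam (ogd_after n) + w - a * w"
        using ogd_lam_Suc_le_if_bid[OF \<open>1 \<le> n\<close> Suc.prems(2) active True]
        by (simp add: w_def a_def diff_divide_distrib)
      then have "ogd_lam (ogd_after (Suc n))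
          \<le> inv_sqrt_sum (ogd_I (ogd_after (Suc n)) \<inter> {k<..Suc n})
            - a * inv_sqrt_sum {k<..Suc n}"
        using IH unfolding A B a_def[symmetric] distrib_left by linarith
      with k show ?thesis unfolding a_def by auto
    next
      case False
      then have A:
          "ogd_I (ogd_after (Suc n)) \<inter> {k<..Suc n} = ogd_I (ogd_after n) \<inter> {k<..n}"
        using ogd_I_Suc[OF active] interval \<open>Suc n \<notin> ogd_I (ogd_after n)\<close> by auto
      have lam: "ogd_lam (ogd_after (Suc n)) = max 0 (ogd_lam (ogd_after n) - a * w)"
        using ogd_lam_Suc_if_no_bid[OF \<open>1 \<le> n\<close> active False] by (simp add: w_def a_def)
      show ?thesis
      proof (cases "ogd_lam (ogd_after n) \<le> a * w")
        case True
        with lam show ?thesis by (intro exI[of _ "Suc n"]) simp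
      next
        case False
        with lam have "ogd_lam (ogd_after (Suc n))
            \<le> inv_sqrt_sum (ogd_I (ogd_after (Suc n)) \<inter> {k<..Suc n})
            - a * inv_sqrt_sum {k<..Suc n}"
          using IH unfolding A B a_def[symmetric] distrib_left by linarith
        with k show ?thesis unfolding a_def by auto
      qed
    qed
  qed
qed simp

lemma card_wins_since_reset_if_no_bid:
  assumes "1 \<le> n" "Suc n \<le> T" "\<not> ogd_stopped (ogd_after n)" "\<not> ogd_bids (Suc n)"
  shows "\<exists>k. 1 \<le> k \<and> k \<le> n \<and>
    (rho / vb)\<^sup>2 / 2 * (real (Suc n) - real k) \<le> real (card (ogd_I (ogd_after n) \<inter> {k<..n}))"
proof -
  let ?I = "ogd_I (ogd_after n)" and ?w = "1 / sqrt (real (Suc n))"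
  define a where "a = rho / vb"
  have "0 \<le> a" "a \<le> 1" using vb rho by (simp_all add: a_def)
  obtain k where k: "1 \<le> k" "k \<le> n"
    and lam: "ogd_lam (ogd_after n) \<le> inv_sqrt_sum (?I \<inter> {k<..n}) - a * inv_sqrt_sum {k<..n}"
    using ogd_lam_le_since_reset[OF assms(1) _ assms(3)] assms(2) unfolding a_def by auto
  have "finite ?I" using ogd_I_subset finite_subset by blast
  have "1 \<in> ?I" using ogd_I_Int_atMost[of 1 n] ogd_run_1(1) assms(1) by auto
  then have "1 \<le> card ?I" using \<open>finite ?I\<close> card_0_eq by fastforce
  moreover have "card ?I < Suc n" using card_mono[OF _ ogd_I_subset[of n]] by simp
  ultimately have "?w \<le> ogd_eps T (card ?I)" using assms(2) by (rule ogd_eps_ge_inverse_sqrt)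
  also have "\<dots> < ogd_lam (ogd_after n)"
    using ogd_eps_less_if_no_bid[where x = "v (Suc n)" and p = p and I = ?I]
      assms(1,2,4) value_range[of "Suc n"] ogd_lam_nonneg[of n]
    by (auto simp: ogd_bid_def)
  finally have "a * ?w \<le> ogd_lam (ogd_after n)"
    using \<open>0 \<le> a\<close> \<open>a \<le> 1\<close> mult_left_le_one_le[of ?w a] by simp
  moreover have "inv_sqrt_sum {k<..Suc n} = inv_sqrt_sum {k<..n} + ?w"
    using k by (simp add: sum_greaterThanAtMost_Suc)
  ultimately have "a * inv_sqrt_sum {k<..Suc n} \<le> inv_sqrt_sum (?I \<inter> {k<..n})"
    using lam by (simp add: distrib_left)
  also have "\<dots> \<le> inv_sqrt_sum {k<..k + card (?I \<inter> {k<..n})}"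
    by (rule sum_le_sum_initial_segment) (auto intro!: divide_left_mono mult_pos_pos)
  finally have "a\<^sup>2 / 2 * (real (Suc n) - real k) \<le> real (card (?I \<inter> {k<..n}))"
    using k \<open>0 \<le> a\<close> \<open>a \<le> 1\<close> by (intro count_lower_bound_from_inv_sqrt_sums) auto
  with k show ?thesis unfolding a_def by auto
qed

lemma card_ogd_I_lower_bound:
  "1 \<le> q \<Longrightarrow> q \<le> T \<Longrightarrow> \<not> ogd_stopped (ogd_after q) \<Longrightarrow>
    (rho / vb)\<^sup>2 / 2 * real q \<le> real (card (ogd_I (ogd_after q)))"
proof (induction q rule: less_induct)
  case (less q)
  let ?C = "(rho / vb)\<^sup>2 / 2"
  have "(rho / vb)\<^sup>2 \<le> 1" using vb rho by (simp add: power_le_one)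
  then have "?C \<le> 1" by simp
  show ?case
  proof (cases "q = 1")
    case True
    then show ?thesis using \<open>?C \<le> 1\<close> ogd_run_1(1) by simp
  next
    case False
    then obtain n where q: "q = Suc n" and "1 \<le> n" using less.prems(1) by (cases q) auto
    let ?I = "ogd_I (ogd_after n)"
    have active: "\<not> ogd_stopped (ogd_after n)" using not_stopped_mono[of n q] less.prems q by simp
    have IH: "?C * real m \<le> real (card (ogd_I (ogd_after m)))" if "1 \<le> m" "m \<le> n" for m
      using less.IH[of m] not_stopped_mono[OF \<open>m \<le> n\<close> active] that less.prems q by simp
    have "finite ?I" "Suc n \<notin> ?I" using ogd_I_subset[of n] finite_subset by auto
    show ?thesis
    proof (cases "ogd_bids (Suc n)")
      case True
      then have "card (ogd_I (ogd_after q)) = Suc (card ?I)"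
        using ogd_I_Suc[OF active] q \<open>finite ?I\<close> \<open>Suc n \<notin> ?I\<close> by simp
      then show ?thesis using IH[OF \<open>1 \<le> n\<close> order_refl] \<open>?C \<le> 1\<close> q by (simp add: algebra_simps)
    next
      case False
      obtain k where k: "1 \<le> k" "k \<le> n"
        and recent: "?C * (real (Suc n) - real k) \<le> real (card (?I \<inter> {k<..n}))"
        using card_wins_since_reset_if_no_bid[OF \<open>1 \<le> n\<close> _ active False] less.prems q by auto
      have "?I - {..k} = ?I \<inter> {k<..n}" using ogd_I_subset[of n] by auto
      then have "card ?I = card (ogd_I (ogd_after k)) + card (?I \<inter> {k<..n})"
        using card_Int_Diff[OF \<open>finite ?I\<close>, of "{..k}"] ogd_I_Int_atMost[OF k(2)] by simp
      moreover have "ogd_I (ogd_after q) = ?I" using ogd_I_Suc[OF active] False q by simp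
      ultimately show ?thesis using IH[OF k] recent q by (simp add: algebra_simps)
    qed
  qed
qed

end

end

theorem lemma5:
  fixes vb rho :: real and T t :: nat and v p :: "nat \<Rightarrow> real"
  assumes "vb > 0" and "0 < rho" and "rho \<le> vb"
    and "\<forall>s\<in>{1..T}. 0 \<le> v s \<and> v s \<le> vb \<and> 0 \<le> p s \<and> p s \<le> vb"
    and "2 \<le> t" and "t \<le> T"
    and "\<not> ogd_stopped (ogd_run vb rho T v p (t - 1))"
  shows "real (card (ogd_I (ogd_run vb rho T v p (t - 1))))
           \<ge> min ((1/2) * (rho / vb)^2) ((sqrt 2 / 4) * (rho / vb)) * real (t - 1)"
proof -
  have "min ((1/2) * (rho / vb)^2) ((sqrt 2 / 4) * (rho / vb)) * real (t - 1)
      \<le> (rho / vb)\<^sup>2 / 2 * real (t - 1)"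
    by (intro mult_right_mono) auto
  also have "\<dots> \<le> real (card (ogd_I (ogd_run vb rho T v p (t - 1))))"
    using assms by (intro card_ogd_I_lower_bound) auto
  finally show ?thesis .
qed

end
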